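(* Let \(\mathcal{I}\) be an instance of 3-SAT and let \(G(\mathcal{I})\), \(T(\mathcal{I})\) be as constructed below. If \(\mathcal{I}\) does not have a satisfying assignment, then \(T(\mathcal{I})\) is not the \(\mathcal{F}\)-tree of any MNS ordering of \(G(\mathcal{I})\), and therefore also not the \(\mathcal{F}\)-tree of any MCS ordering of \(G(\mathcal{I})\).
   Context: Let \(\mathcal{I}\) have variables \(x_1,\dots,x_k\) and clauses \(C_1,\dots,C_l\), each a disjunction of three literals. \(G(\mathcal{I})\) has vertices: literal vertices \(X=\{x_1,\dots,x_k,\overline{x_1},\dots,\overline{x_k}\}\), clause vertices \(c_1,\dots,c_l\), and six vertices \(r,p,q,a,b,t\). Edges: any two vertices of \(X\) are adjacent except the pairs \(x_j\overline{x_j}\); the clause vertices are pairwise nonadjacent; \(c_i\) is adjacent to every vertex of \(X\) except the three literal vertices of the literals of \(C_i\); each of \(r,p,q,a\) is adjacent to all literal vertices and all clause vertices; \(b\) is adjacent to all literal vertices; additionally the edges \(ab,ap,aq,bq,br,bt,pr,qr,qt\); no other edges. \(T(\mathcal{I})\) is the spanning tree consisting of all edges of \(G(\mathcal{I})\) incident to \(r\) together with the edges \(pa\) and \(bt\). With \(n\) the number of vertices: an MCS ordering is produced by repeatedly choosing an unnumbered vertex with the largest number of numbered neighbors; an MNS ordering uses set labels (all \(\emptyset\), start vertex gets \(\{n+1\}\); repeatedly pick an unnumbered vertex with inclusion-maximal label as \(v_j\) and add \(j\) to the labels of its unnumbered neighbors); ties are arbitrary. The \(\mathcal{F}\)-tree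 of an ordering \((v_1,\dots,v_n)\) has, for each \(v\ne v_1\), an edge from \(v\) to its leftmost neighbor in the ordering. *)

theory Defs
  imports Main
begin

text \<open>A literal is a pair (i, b): (i, True) is x_i, (i, False) is the negation of x_i.\<close>

type_synonym literal = "nat \<times> bool"
type_synonym clause = "literal list"

definition wf_instance :: "nat \<Rightarrow> clause list \<Rightarrow> bool" where
  "wf_instance k cls \<longleftrightarrow> (\<forall>C \<in> set cls. length C = 3 \<and> (\<forall>(i,b) \<in> set C. i < k))"

definition satisfiable :: "nat \<Rightarrow> clause list \<Rightarrow> bool" where
  "satisfiable k cls \<longleftrightarrow> (\<exists>\<alpha> :: nat \<Rightarrow> bool. \<forall>C \<in> set cls. \<exists>(i,b) \<in> set C. \<alpha> i = b)"

datatype vert = Lit nat bool | Cl nat | Rv | Pv | Qv | Av | Bv | Tv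

definition verts :: "nat \<Rightarrow> clause list \<Rightarrow> vert set" where
  "verts k cls = {Lit i b | i b. i < k} \<union> {Cl j | j. j < length cls} \<union> {Rv, Pv, Qv, Av, Bv, Tv}"

text \<open>One direction of each edge of G(I); the graph is its symmetric closure on the vertex set.\<close>
fun edge0 :: "clause list \<Rightarrow> vert \<Rightarrow> vert \<Rightarrow> bool" where
  "edge0 cls (Lit i b) (Lit j c) = (i \<noteq> j)"
| "edge0 cls (Cl j) (Lit i b) = ((i, b) \<notin> set (cls ! j))"
| "edge0 cls Rv (Lit i b) = True"
| "edge0 cls Pv (Lit i b) = True"
| "edge0 cls Qv (Lit i b) = True"
| "edge0 cls Av (Lit i b) = True"
| "edge0 cls Bv (Lit i b) = True"
| "edge0 cls Rv (Cl j) = True"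
| "edge0 cls Pv (Cl j) = True"
| "edge0 cls Qv (Cl j) = True"
| "edge0 cls Av (Cl j) = True"
| "edge0 cls Av Bv = True"
| "edge0 cls Av Pv = True"
| "edge0 cls Av Qv = True"
| "edge0 cls Bv Qv = True"
| "edge0 cls Bv Rv = True"
| "edge0 cls Bv Tv = True"
| "edge0 cls Pv Rv = True"
| "edge0 cls Qv Rv = True"
| "edge0 cls Qv Tv = True"
| "edge0 cls _ _ = False"

definition G_adj :: "nat \<Rightarrow> clause list \<Rightarrow> vert \<Rightarrow> vert \<Rightarrow> bool" where
  "G_adj k cls x y \<longleftrightarrow> x \<in> verts k cls \<and> y \<in> verts k cls \<and> (edge0 cls x y \<or> edge0 cls y x)"

definition G_edges :: "nat \<Rightarrow> clause list \<Rightarrow> vert set set" where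
  "G_edges k cls = {{x, y} | x y. G_adj k cls x y}"

definition T_edges :: "nat \<Rightarrow> clause list \<Rightarrow> vert set set" where
  "T_edges k cls = {e \<in> G_edges k cls. Rv \<in> e} \<union> {{Pv, Av}, {Bv, Tv}}"

text \<open>Orderings are lists (v_1,...,v_n) = (\<sigma>!0,...,\<sigma>!(n-1)) listing every vertex exactly once.\<close>
definition is_ordering :: "'v set \<Rightarrow> 'v list \<Rightarrow> bool" where
  "is_ordering V \<sigma> \<longleftrightarrow> distinct \<sigma> \<and> set \<sigma> = V"

definition is_MCS :: "'v set \<Rightarrow> ('v \<Rightarrow> 'v \<Rightarrow> bool) \<Rightarrow> 'v list \<Rightarrow> bool" where
  "is_MCS V adj \<sigma> \<longleftrightarrow> is_ordering V \<sigma> \<and>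
     (\<forall>j < length \<sigma>. \<forall>w \<in> V - set (take j \<sigma>).
        card {u \<in> set (take j \<sigma>). adj w u} \<le> card {u \<in> set (take j \<sigma>). adj (\<sigma>!j) u})"

text \<open>MNS label of vertex w after v_1..v_j have been numbered (positions numbered 1..n;
  the start vertex v_1 initially gets label {n+1}).\<close>
definition mns_label :: "('v \<Rightarrow> 'v \<Rightarrow> bool) \<Rightarrow> 'v list \<Rightarrow> nat \<Rightarrow> 'v \<Rightarrow> nat set" where
  "mns_label adj \<sigma> j w =
     (if w = \<sigma>!0 then {length \<sigma> + 1} else {}) \<union> {i + 1 | i. i < j \<and> adj (\<sigma>!i) w}"

definition is_MNS :: "'v set \<Rightarrow> ('v \<Rightarrow> 'v \<Rightarrow> bool) \<Rightarrow> 'v list \<Rightarrow> bool" where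
  "is_MNS V adj \<sigma> \<longleftrightarrow> is_ordering V \<sigma> \<and>
     (\<forall>j < length \<sigma>. \<forall>w \<in> V - set (take j \<sigma>).
        \<not> (mns_label adj \<sigma> j (\<sigma>!j) \<subset> mns_label adj \<sigma> j w))"

definition F_tree :: "('v \<Rightarrow> 'v \<Rightarrow> bool) \<Rightarrow> 'v list \<Rightarrow> 'v set set" where
  "F_tree adj \<sigma> = {{\<sigma>!j, \<sigma>!(LEAST i. i < length \<sigma> \<and> adj (\<sigma>!j) (\<sigma>!i))} | j. 0 < j \<and> j < length \<sigma>}"

end

theory Submission
  imports Defs
begin

text \<open>Both MNS and MCS orderings have the following property: a vertex numbered at step
  \<open>j > 0\<close> has an inclusion-maximal set of numbered neighbours among all unnumbered vertices.
  Suppose such an ordering \<open>\<sigma>\<close> of \<open>G(I)\<close> has \<open>F\<close>-tree \<open>T(I)\<close>. Since \<open>T(I)\<close> is a star at \<open>r\<close> plus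
  the edges \<open>pa\<close> and \<open>bt\<close>, the ordering must start with \<open>r, p\<close> and must number \<open>b\<close> before \<open>q\<close>
  and \<open>t\<close>; maximality at \<open>b\<close>, compared with \<open>q\<close>, keeps all clause vertices after \<open>b\<close>.
  Make a literal true if it is numbered before its complement. For a clause \<open>c\<close> falsified by
  this assignment, consider the first vertex that is either \<open>b\<close> or a literal numbered after
  its complement: \<open>c\<close> is adjacent to every vertex before it, while that vertex misses \<open>p\<close>
  or its complement, contradicting maximality.\<close>

definition earlier_nbrs :: "('v \<Rightarrow> 'v \<Rightarrow> bool) \<Rightarrow> 'v list \<Rightarrow> nat \<Rightarrow> 'v \<Rightarrow> nat set" where
  "earlier_nbrs adj \<sigma> j v = {i. i < j \<and> adj (\<sigma>!i) v}"

definition maximal_nbhds :: "('v \<Rightarrow> 'v \<Rightarrow> bool) \<Rightarrow> 'v list \<Rightarrow> bool" where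
  "maximal_nbhds adj \<sigma> \<longleftrightarrow> (\<forall>i j. 0 < j \<longrightarrow> j \<le> i \<longrightarrow> i < length \<sigma> \<longrightarrow>
     \<not> earlier_nbrs adj \<sigma> j (\<sigma>!j) \<subset> earlier_nbrs adj \<sigma> j (\<sigma>!i))"

lemma nth_in_set_take_iff:
  assumes "distinct xs" "i < length xs"
  shows "xs!i \<in> set (take j xs) \<longleftrightarrow> i < j"
  using assms by (auto simp: in_set_conv_nth nth_eq_iff_index_eq)

lemma set_take_eq_image_nth:
  "j \<le> length xs \<Longrightarrow> set (take j xs) = (!) xs ` {..<j}"
  by (force simp: in_set_conv_nth)

lemma mns_label_eq_earlier_nbrs:
  assumes "distinct \<sigma>" "0 < i" "i < length \<sigma>"
  shows "mns_label adj \<sigma> j (\<sigma>!i) = Suc ` earlier_nbrs adj \<sigma> j (\<sigma>!i)"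
proof -
  have "\<sigma>!i \<noteq> \<sigma>!0" using assms by (subst nth_eq_iff_index_eq) auto
  then show ?thesis by (auto simp: mns_label_def earlier_nbrs_def)
qed

lemma is_MNS_maximal_nbhds:
  assumes "is_MNS V adj \<sigma>"
  shows "maximal_nbhds adj \<sigma>"
  unfolding maximal_nbhds_def
proof (intro allI impI)
  fix i j :: nat assume j: "0 < j" "j \<le> i" and i: "i < length \<sigma>"
  have \<sigma>: "distinct \<sigma>" "set \<sigma> = V" using assms by (auto simp: is_MNS_def is_ordering_def)
  have "\<sigma>!i \<in> V - set (take j \<sigma>)"
    using nth_mem[OF i] i j by (simp add: \<sigma> nth_in_set_take_iff)
  then have "\<not> mns_label adj \<sigma> j (\<sigma>!j) \<subset> mns_label adj \<sigma> j (\<sigma>!i)"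
    using assms i j unfolding is_MNS_def by simp
  then show "\<not> earlier_nbrs adj \<sigma> j (\<sigma>!j) \<subset> earlier_nbrs adj \<sigma> j (\<sigma>!i)"
    using i j by (simp add: mns_label_eq_earlier_nbrs \<sigma>(1) psubset_eq inj_image_subset_iff inj_image_eq_iff)
qed

lemma card_numbered_nbrs_eq:
  assumes "distinct \<sigma>" "j \<le> length \<sigma>" "symp adj"
  shows "card {u \<in> set (take j \<sigma>). adj v u} = card (earlier_nbrs adj \<sigma> j v)"
proof -
  have sym: "adj x y \<longleftrightarrow> adj y x" for x y using \<open>symp adj\<close> by (blast dest: sympD)
  have "{u \<in> set (take j \<sigma>). adj v u} = (!) \<sigma> ` earlier_nbrs adj \<sigma> j v"
    using assms(2) by (auto simp: set_take_eq_image_nth earlier_nbrs_def sym[of v])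
  moreover have "inj_on ((!) \<sigma>) (earlier_nbrs adj \<sigma> j v)"
    using assms(1,2) by (intro inj_on_nth) (auto simp: earlier_nbrs_def)
  ultimately show ?thesis by (simp add: card_image)
qed

lemma is_MCS_maximal_nbhds:
  assumes "is_MCS V adj \<sigma>" "symp adj"
  shows "maximal_nbhds adj \<sigma>"
  unfolding maximal_nbhds_def
proof (intro allI impI notI)
  fix i j :: nat assume j: "0 < j" "j \<le> i" and i: "i < length \<sigma>"
    and psub: "earlier_nbrs adj \<sigma> j (\<sigma>!j) \<subset> earlier_nbrs adj \<sigma> j (\<sigma>!i)"
  have \<sigma>: "distinct \<sigma>" "set \<sigma> = V" using assms by (auto simp: is_MCS_def is_ordering_def)
  have "\<sigma>!i \<in> V - set (take j \<sigma>)"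
    using nth_mem[OF i] i j by (simp add: \<sigma> nth_in_set_take_iff)
  moreover have "j < length \<sigma>" using i j by simp
  ultimately have "card {u \<in> set (take j \<sigma>). adj (\<sigma>!i) u} \<le> card {u \<in> set (take j \<sigma>). adj (\<sigma>!j) u}"
    using assms(1) unfolding is_MCS_def by blast
  then have "card (earlier_nbrs adj \<sigma> j (\<sigma>!i)) \<le> card (earlier_nbrs adj \<sigma> j (\<sigma>!j))"
    using card_numbered_nbrs_eq[OF \<sigma>(1) _ assms(2)] \<open>j < length \<sigma>\<close> by simp
  moreover have "card (earlier_nbrs adj \<sigma> j (\<sigma>!j)) < card (earlier_nbrs adj \<sigma> j (\<sigma>!i))"
    using psub by (intro psubset_card_mono) (auto simp: earlier_nbrs_def)
  ultimately show False by simp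
qed

lemma leftmost_nbr_in_F_tree:
  assumes "0 < j" "j < length \<sigma>" "i < length \<sigma>" "adj (\<sigma>!j) (\<sigma>!i)"
    and "\<And>i'. i' < i \<Longrightarrow> \<not> adj (\<sigma>!j) (\<sigma>!i')"
  shows "{\<sigma>!j, \<sigma>!i} \<in> F_tree adj \<sigma>"
proof -
  have "(LEAST i'. i' < length \<sigma> \<and> adj (\<sigma>!j) (\<sigma>!i')) = i"
    using assms by (intro Least_equality) (auto simp: not_less[symmetric])
  then show ?thesis unfolding F_tree_def using assms by auto
qed

lemma in_verts [simp]:
  "Lit i b \<in> verts k cls \<longleftrightarrow> i < k" "Cl j \<in> verts k cls \<longleftrightarrow> j < length cls"
  "Rv \<in> verts k cls" "Pv \<in> verts k cls" "Qv \<in> verts k cls"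
  "Av \<in> verts k cls" "Bv \<in> verts k cls" "Tv \<in> verts k cls"
  by (auto simp: verts_def)

lemma G_adj_sym: "G_adj k cls x y \<longleftrightarrow> G_adj k cls y x"
  by (auto simp: G_adj_def)

lemma symp_G_adj: "symp (G_adj k cls)"
  by (auto intro: sympI simp: G_adj_sym)

lemma G_adj_irrefl: "\<not> G_adj k cls v v"
  by (cases v) (auto simp: G_adj_def)

lemma G_adj_Rv_imp_adj_Av: "G_adj k cls Rv v \<Longrightarrow> G_adj k cls Av v"
  by (cases v) (auto simp: G_adj_def)

lemma G_adj_Bv_imp_adj_Qv: "v \<noteq> Qv \<Longrightarrow> G_adj k cls v Bv \<Longrightarrow> G_adj k cls v Qv"
  by (cases v) (auto simp: G_adj_def)

lemma G_adj_Tv: "G_adj k cls v Tv \<Longrightarrow> v = Bv \<or> v = Qv"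
  by (cases v) (auto simp: G_adj_def)

lemma T_edge_avoiding_Rv:
  "{x, y} \<in> T_edges k cls \<Longrightarrow> x \<noteq> Rv \<Longrightarrow> y \<noteq> Rv \<Longrightarrow> {x, y} = {Pv, Av} \<or> {x, y} = {Bv, Tv}"
  unfolding T_edges_def G_edges_def by auto

lemma G_edge_not_in_T:
  assumes "v \<in> verts k cls" "v \<noteq> Rv" "cls \<noteq> []"
  shows "\<exists>w. G_adj k cls v w \<and> {v, w} \<notin> T_edges k cls"
proof -
  obtain w where "G_adj k cls v w" "w \<noteq> Rv" "{v, w} \<noteq> {Pv, Av}" "{v, w} \<noteq> {Bv, Tv}"
  proof (cases v)
    case Lit then show ?thesis using assms by (intro that[of Av]) (auto simp: G_adj_def)
  next
    case Cl then show ?thesis using assms by (intro that[of Av]) (auto simp: G_adj_def)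
  next
    case Pv then show ?thesis using assms by (intro that[of "Cl 0"]) (auto simp: G_adj_def)
  next
    case Qv then show ?thesis by (intro that[of Av]) (auto simp: G_adj_def doubleton_eq_iff)
  next
    case Av then show ?thesis by (intro that[of Bv]) (auto simp: G_adj_def doubleton_eq_iff)
  next
    case Bv then show ?thesis by (intro that[of Qv]) (auto simp: G_adj_def doubleton_eq_iff)
  next
    case Tv then show ?thesis by (intro that[of Qv]) (auto simp: G_adj_def doubleton_eq_iff)
  qed (use assms in simp)
  then show ?thesis using T_edge_avoiding_Rv assms(2) by blast
qed

locale F_tree_is_T =
  fixes k :: nat and cls :: "clause list" and \<sigma> :: "vert list"
  assumes cls_nonempty: "cls \<noteq> []"
    and ordering: "is_ordering (verts k cls) \<sigma>"
    and maximal: "maximal_nbhds (G_adj k cls) \<sigma>"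
    and F_tree_eq: "F_tree (G_adj k cls) \<sigma> = T_edges k cls"
begin

abbreviation V where "V \<equiv> verts k cls"
abbreviation adj where "adj \<equiv> G_adj k cls"

definition pos :: "vert \<Rightarrow> nat" where
  "pos = the_inv_into {..<length \<sigma>} ((!) \<sigma>)"

lemma bij_nth: "bij_betw ((!) \<sigma>) {..<length \<sigma>} V"
  using ordering by (intro bij_betw_nth) (auto simp: is_ordering_def)

lemma pos_less: "v \<in> V \<Longrightarrow> pos v < length \<sigma>"
  unfolding pos_def using bij_nth
  by (metis bij_betw_def bij_betw_the_inv_into lessThan_iff bij_betwE)

lemma nth_pos [simp]: "v \<in> V \<Longrightarrow> \<sigma> ! pos v = v"
  unfolding pos_def using bij_nth by (rule f_the_inv_into_f_bij_betw)

lemma pos_nth [simp]: "i < length \<sigma> \<Longrightarrow> pos (\<sigma>!i) = i"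
  unfolding pos_def using bij_nth by (simp add: bij_betw_def the_inv_into_f_f)

lemma nth_in_V: "i < length \<sigma> \<Longrightarrow> \<sigma>!i \<in> V"
  using bij_nth by (auto dest: bij_betwE)

lemma pos_eq_iff: "v \<in> V \<Longrightarrow> w \<in> V \<Longrightarrow> pos v = pos w \<longleftrightarrow> v = w"
  by (metis nth_pos)

lemma later_vertex_not_dominating:
  assumes "v \<in> V" "w \<in> V" "0 < pos v" "pos v \<le> pos w"
    and dominated: "\<And>x. x \<in> V \<Longrightarrow> pos x < pos v \<Longrightarrow> adj x v \<Longrightarrow> adj x w"
    and "x \<in> V" "pos x < pos v" "adj x w" "\<not> adj x v"
  shows False
proof -
  have "earlier_nbrs adj \<sigma> (pos v) (\<sigma> ! pos v) \<subset> earlier_nbrs adj \<sigma> (pos v) (\<sigma> ! pos w)"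
  proof
    show "earlier_nbrs adj \<sigma> (pos v) (\<sigma> ! pos v) \<subseteq> earlier_nbrs adj \<sigma> (pos v) (\<sigma> ! pos w)"
      using assms(1,2) pos_less[OF assms(1)] dominated[OF nth_in_V]
      by (auto simp: earlier_nbrs_def)
    have "pos x \<in> earlier_nbrs adj \<sigma> (pos v) (\<sigma> ! pos w) - earlier_nbrs adj \<sigma> (pos v) (\<sigma> ! pos v)"
      using assms by (simp add: earlier_nbrs_def)
    then show "earlier_nbrs adj \<sigma> (pos v) (\<sigma> ! pos v) \<noteq> earlier_nbrs adj \<sigma> (pos v) (\<sigma> ! pos w)"
      by blast
  qed
  then show False
    using maximal assms(3,4) pos_less[OF assms(2)] unfolding maximal_nbhds_def by blast
qed

lemma leftmost_nbr_T_edge: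
  assumes "v \<in> V" "0 < pos v" "adj v u" and leftmost: "\<And>x. x \<in> V \<Longrightarrow> pos x < pos u \<Longrightarrow> \<not> adj v x"
  shows "{v, u} \<in> T_edges k cls"
proof -
  have "u \<in> V" using assms(3) by (simp add: G_adj_def)
  have "{\<sigma> ! pos v, \<sigma> ! pos u} \<in> F_tree adj \<sigma>"
    using assms \<open>u \<in> V\<close> pos_less[OF assms(1)] pos_less[OF \<open>u \<in> V\<close>] leftmost[OF nth_in_V]
    by (intro leftmost_nbr_in_F_tree) auto
  then show ?thesis using assms(1) \<open>u \<in> V\<close> F_tree_eq by simp
qed

lemma pos_Rv: "pos Rv = 0"
proof (rule ccontr)
  assume "pos Rv \<noteq> 0"
  have "0 < length \<sigma>" using pos_less[OF in_verts(3)] by linarith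
  define \<rho> where "\<rho> = \<sigma>!0"
  have \<rho>: "\<rho> \<in> V" "pos \<rho> = 0" using \<open>0 < length \<sigma>\<close> nth_in_V by (simp_all add: \<rho>_def)
  then have "\<rho> \<noteq> Rv" using \<open>pos Rv \<noteq> 0\<close> by auto
  then obtain w where w: "adj \<rho> w" "{\<rho>, w} \<notin> T_edges k cls"
    using G_edge_not_in_T \<rho>(1) cls_nonempty by blast
  have "w \<in> V" using w(1) by (simp add: G_adj_def)
  have "{w, \<rho>} \<in> T_edges k cls"
  proof (rule leftmost_nbr_T_edge)
    have "w \<noteq> \<rho>" using w(1) G_adj_irrefl by metis
    then show "0 < pos w" using \<rho> \<open>w \<in> V\<close> pos_eq_iff by fastforce
  qed (use \<open>w \<in> V\<close> w(1) \<rho>(2) G_adj_sym in auto)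
  with w(2) show False by (simp add: insert_commute)
qed

lemma pos_eq_0_iff [simp]: "v \<in> V \<Longrightarrow> pos v = 0 \<longleftrightarrow> v = Rv"
  using pos_eq_iff[of v Rv] pos_Rv by simp

lemma pos_gt_0_iff [simp]: "v \<in> V \<Longrightarrow> 0 < pos v \<longleftrightarrow> v \<noteq> Rv"
  by (simp add: gr0_conv_Suc flip: pos_eq_0_iff)

lemma pos_Pv: "pos Pv = 1"
proof -
  have "0 < pos Pv" by simp
  then have "1 < length \<sigma>" using pos_less[OF in_verts(4)] by linarith
  define v where "v = \<sigma>!1"
  have v: "v \<in> V" "pos v = 1"
    using \<open>1 < length \<sigma>\<close> nth_in_V by (simp_all add: v_def)
  have "adj Rv v"
  proof (rule ccontr)
    assume "\<not> adj Rv v"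
    show False
    proof (rule later_vertex_not_dominating[of v Pv Rv])
      show "\<And>x. x \<in> V \<Longrightarrow> pos x < pos v \<Longrightarrow> adj x v \<Longrightarrow> adj x Pv"
        using v(2) \<open>\<not> adj Rv v\<close> by simp
      show "pos v \<le> pos Pv" using v(2) \<open>0 < pos Pv\<close> by linarith
    qed (use v \<open>\<not> adj Rv v\<close> in \<open>auto simp: G_adj_def pos_Rv\<close>)
  qed
  then have "v \<noteq> Rv" using G_adj_irrefl by metis
  have "{Av, v} \<in> T_edges k cls"
  proof (rule leftmost_nbr_T_edge)
    show "adj Av v" using \<open>adj Rv v\<close> by (rule G_adj_Rv_imp_adj_Av)
  qed (use v in \<open>auto simp: G_adj_def\<close>)
  then have "v = Pv" using T_edge_avoiding_Rv \<open>v \<noteq> Rv\<close> by (fastforce simp: doubleton_eq_iff)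
  then show ?thesis using v by simp
qed

lemma Bv_before_Qv: "pos Bv < pos Qv"
proof (rule ccontr)
  assume "\<not> pos Bv < pos Qv"
  then have "pos Qv < pos Bv" using pos_eq_iff[of Bv Qv] by auto
  have "{Tv, Qv} \<in> T_edges k cls"
  proof (rule leftmost_nbr_T_edge)
    fix x assume "x \<in> V" "pos x < pos Qv"
    then show "\<not> adj Tv x" using \<open>pos Qv < pos Bv\<close> G_adj_Tv G_adj_sym by fastforce
  qed (auto simp: G_adj_def)
  then show False using T_edge_avoiding_Rv[of Tv Qv] by (auto simp: doubleton_eq_iff)
qed

lemma Bv_before_Tv: "pos Bv < pos Tv"
proof (rule ccontr)
  assume "\<not> pos Bv < pos Tv"
  then have "pos Tv < pos Bv" using pos_eq_iff[of Bv Tv] by auto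
  show False
  proof (rule later_vertex_not_dominating[of Tv Bv Rv])
    fix x assume "x \<in> V" "pos x < pos Tv" "adj x Tv"
    then show "adj x Bv" using \<open>pos Tv < pos Bv\<close> Bv_before_Qv G_adj_Tv by fastforce
  qed (use \<open>pos Tv < pos Bv\<close> in \<open>auto simp: G_adj_def pos_Rv\<close>)
qed

lemma Bv_before_Cl: "j < length cls \<Longrightarrow> pos Bv < pos (Cl j)"
proof (rule ccontr)
  assume "j < length cls" "\<not> pos Bv < pos (Cl j)"
  then have "pos (Cl j) < pos Bv" using pos_eq_iff[of Bv "Cl j"] by auto
  show False
  proof (rule later_vertex_not_dominating[of Bv Qv "Cl j"])
    fix x assume "x \<in> V" "pos x < pos Bv" "adj x Bv"
    moreover have "x \<noteq> Qv" using \<open>pos x < pos Bv\<close> Bv_before_Qv by auto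
    ultimately show "adj x Qv" using G_adj_Bv_imp_adj_Qv by blast
  qed (use \<open>j < length cls\<close> \<open>pos (Cl j) < pos Bv\<close> Bv_before_Qv in \<open>auto simp: G_adj_def\<close>)
qed

definition assignment :: "nat \<Rightarrow> bool" where
  "assignment i \<longleftrightarrow> pos (Lit i True) < pos (Lit i False)"

lemma assignment_eq_iff: "i < k \<Longrightarrow> assignment i = b \<longleftrightarrow> pos (Lit i b) < pos (Lit i (\<not> b))"
  using pos_eq_iff[of "Lit i True" "Lit i False"] by (cases b) (auto simp: assignment_def)

lemma adj_Cl_before_Bv:
  assumes "j < length cls" and falsified: "\<forall>(i, b) \<in> set (cls!j). assignment i \<noteq> b"
    and "v \<in> V" "pos v < pos Bv" and true_lit: "\<And>i b. v = Lit i b \<Longrightarrow> assignment i = b"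
  shows "adj v (Cl j)"
proof (cases v)
  case (Lit i b)
  then show ?thesis using assms by (fastforce simp: G_adj_def)
next
  case (Cl j')
  then show ?thesis using assms Bv_before_Cl[of j'] by auto
next
  case Qv
  then show ?thesis using assms Bv_before_Qv by auto
next
  case Tv
  then show ?thesis using assms Bv_before_Tv by auto
qed (use assms in \<open>auto simp: G_adj_def\<close>)

lemma satisfiable: "satisfiable k cls"
  unfolding satisfiable_def
proof (intro exI ballI)
  fix C assume "C \<in> set cls"
  then obtain j where j: "j < length cls" "cls!j = C" by (auto simp: in_set_conv_nth)
  show "\<exists>(i, b) \<in> set C. assignment i = b"
  proof (rule ccontr)
    assume "\<not> ?thesis"
    then have falsified: "\<forall>(i, b) \<in> set (cls!j). assignment i \<noteq> b" using j(2) by auto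
    define late where "late u \<longleftrightarrow> u \<in> V \<and> (u = Bv \<or> (\<exists>i b. u = Lit i b \<and> assignment i \<noteq> b))" for u
    obtain u where u: "late u" and first: "\<And>y. late y \<Longrightarrow> pos u \<le> pos y"
      using ex_has_least_nat[of late Bv pos] by (auto simp: late_def)
    have "u \<in> V" "u \<noteq> Rv" "pos u \<le> pos Bv" using u first[of Bv] by (auto simp: late_def)
    have adj_before: "adj x (Cl j)" if "x \<in> V" "pos x < pos u" for x
    proof (rule adj_Cl_before_Bv[OF j(1) falsified that(1)])
      show "pos x < pos Bv" using that(2) \<open>pos u \<le> pos Bv\<close> by simp
      show "assignment i = b" if "x = Lit i b" for i b
        using first[of x] \<open>x \<in> V\<close> \<open>pos x < pos u\<close> that by (fastforce simp: late_def)
    qed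
    obtain x where x: "x \<in> V" "pos x < pos u" "\<not> adj x u"
    proof -
      consider "u = Bv" | i b where "u = Lit i b" "assignment i \<noteq> b" using u by (auto simp: late_def)
      then show thesis
      proof cases
        case 1
        have "pos Bv \<noteq> 1" using pos_Pv pos_eq_iff[of Bv Pv] by auto
        moreover have "0 < pos Bv" by simp
        ultimately have "pos Pv < pos Bv" using pos_Pv by linarith
        then show thesis using 1 by (intro that[of Pv]) (auto simp: G_adj_def)
      next
        case 2
        then have "pos (Lit i (\<not> b)) < pos u"
          using \<open>u \<in> V\<close> assignment_eq_iff[of i "\<not> b"] by simp
        then show thesis using 2 \<open>u \<in> V\<close> by (intro that[of "Lit i (\<not> b)"]) (auto simp: G_adj_def)
      qed
    qed
    show False
    proof (rule later_vertex_not_dominating[of u "Cl j" x])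
      show "pos u \<le> pos (Cl j)" using \<open>pos u \<le> pos Bv\<close> Bv_before_Cl[OF j(1)] by simp
    qed (use \<open>u \<in> V\<close> \<open>u \<noteq> Rv\<close> j(1) x adj_before in auto)
  qed
qed

end

theorem lemma12:
  fixes k :: nat and cls :: "clause list"
  assumes "wf_instance k cls"
    and "\<not> satisfiable k cls"
  shows "(\<forall>\<sigma>. is_MNS (verts k cls) (G_adj k cls) \<sigma> \<longrightarrow> F_tree (G_adj k cls) \<sigma> \<noteq> T_edges k cls)
       \<and> (\<forall>\<sigma>. is_MCS (verts k cls) (G_adj k cls) \<sigma> \<longrightarrow> F_tree (G_adj k cls) \<sigma> \<noteq> T_edges k cls)"
proof -
  have "cls \<noteq> []" using assms(2) by (auto simp: satisfiable_def)
  have no_maximal_ordering: "F_tree (G_adj k cls) \<sigma> \<noteq> T_edges k cls"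
    if "is_ordering (verts k cls) \<sigma>" "maximal_nbhds (G_adj k cls) \<sigma>" for \<sigma>
    using F_tree_is_T.satisfiable[OF F_tree_is_T.intro[OF \<open>cls \<noteq> []\<close> that]] assms(2) by blast
  show ?thesis
  proof (intro conjI allI impI)
    fix \<sigma> assume MNS: "is_MNS (verts k cls) (G_adj k cls) \<sigma>"
    then have "is_ordering (verts k cls) \<sigma>" by (simp add: is_MNS_def)
    from this is_MNS_maximal_nbhds[OF MNS] show "F_tree (G_adj k cls) \<sigma> \<noteq> T_edges k cls"
      by (rule no_maximal_ordering)
  next
    fix \<sigma> assume MCS: "is_MCS (verts k cls) (G_adj k cls) \<sigma>"
    then have "is_ordering (verts k cls) \<sigma>" by (simp add: is_MCS_def)
    from this is_MCS_maximal_nbhds[OF MCS symp_G_adj] show "F_tree (G_adj k cls) \<sigma> \<noteq> T_edges k cls"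
      by (rule no_maximal_ordering)
  qed
qed

end
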